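(* Let $m,j$ be positive integers and suppose that the outcome class of $G_{m,j}$ is $H$ or $2$. Then there exists $N_0$ such that for all integers $N\ge N_0$, the outcome class of $G_{m,N\gcd(j,2m)}$ is $H$.
   Context: Domineering is a two-player game played on a rectangular grid of unit squares. The players alternate placing dominoes, each covering two adjacent unoccupied squares; the player Vertical must place dominoes vertically (covering two squares in the same column), and the player Horizontal must place them horizontally (covering two squares in the same row). A player with no legal move on her turn loses. $G_{m,n}$ denotes the empty board with vertical dimension $m$ (number of rows) and horizontal dimension $n$ (number of columns). Every position has one of four outcome classes under optimal play: $V$ (Vertical wins whoever moves first), $H$ (Horizontal wins whoever moves first), $1$ (the player who moves first wins), $2$ (the player who moves second wins). *)

theory Defs
  imports Main
begin

text \<open>Cells are (row, column) pairs. A position is the set of unoccupied cells.\<close>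

type_synonym cell = "nat \<times> nat"

datatype player = Vertical | Horizontal

fun other :: "player \<Rightarrow> player" where
  "other Vertical = Horizontal"
| "other Horizontal = Vertical"

definition grid :: "nat \<Rightarrow> nat \<Rightarrow> cell set" where
  "grid m n = {(r, c). r < m \<and> c < n}"

fun domino :: "player \<Rightarrow> cell \<Rightarrow> cell set" where
  "domino Vertical (r, c) = {(r, c), (Suc r, c)}"
| "domino Horizontal (r, c) = {(r, c), (r, Suc c)}"

definition moves :: "player \<Rightarrow> cell set \<Rightarrow> cell set set" where
  "moves p S = {S - domino p x | x. domino p x \<subseteq> S}"

text \<open>wins_fuel n p S: player p, moving first on free set S, has a winning strategy
  (normal play), exploring at most n moves; fuel card S always suffices since each
  move removes two cells.\<close>
fun wins_fuel :: "nat \<Rightarrow> player \<Rightarrow> cell set \<Rightarrow> bool" where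
  "wins_fuel 0 p S = False"
| "wins_fuel (Suc n) p S = (\<exists>S' \<in> moves p S. \<not> wins_fuel n (other p) S')"

definition wins_first :: "player \<Rightarrow> cell set \<Rightarrow> bool" where
  "wins_first p S = wins_fuel (card S) p S"

datatype outcome = OutV | OutH | OutFirst | OutSecond

definition outcome :: "cell set \<Rightarrow> outcome" where
  "outcome S =
    (if wins_first Vertical S \<and> wins_first Horizontal S then OutFirst
     else if \<not> wins_first Vertical S \<and> \<not> wins_first Horizontal S then OutSecond
     else if wins_first Vertical S then OutV
     else OutH)"

end

theory Submission
  imports Defs
begin

text \<open>A grid of width a + b is the disjoint union of the grids of widths a and b (translated),
  and no vertical domino straddles the two parts. Hence if Vertical loses moving first on both,
  she loses on the union (Horizontal always answers in the component Vertical just played in),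
  and if moreover Horizontal wins moving first on the first part, he wins on the union. So the
  widths on which Vertical loses moving first form an additive monoid. It contains 2m: the
  m-by-2m board consists of an m-by-m square and its image under a quarter turn, which sends
  vertical dominoes to horizontal ones, so Horizontal can copy every move of Vertical; the same
  symmetry, after an opening move across the centre of the bottom row, makes Horizontal win
  moving first on the m-by-2m board. Since every large multiple of gcd j (2m) is a non-negative
  combination of j and 2m, every large such multiple is 2m plus an element of the monoid.\<close>

lemma finite_domino [simp]: "finite (domino p x)"
  by (cases p; cases x) auto

lemma card_domino [simp]: "card (domino p x) = 2"
  by (cases p; cases x) auto

lemma domino_nonempty [simp]: "domino p x \<noteq> {}"
  by (cases p; cases x) auto

lemma card_Diff_domino:
  "finite S \<Longrightarrow> domino p x \<subseteq> S \<Longrightarrow> card (S - domino p x) < card S"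
  using card_Diff_subset[of "domino p x" S] card_mono[of S "domino p x"] by simp

lemma finite_grid: "finite (grid m n)"
  by (rule finite_subset[of _ "{..<m} \<times> {..<n}"]) (auto simp: grid_def)

lemma wins_fuel_Suc_iff:
  "wins_fuel (Suc n) p S \<longleftrightarrow> (\<exists>x. domino p x \<subseteq> S \<and> \<not> wins_fuel n (other p) (S - domino p x))"
  by (auto simp: moves_def)

lemma wins_fuel_sufficient:
  "finite S \<Longrightarrow> card S \<le> n \<Longrightarrow> card S \<le> n' \<Longrightarrow> wins_fuel n p S = wins_fuel n' p S"
proof (induction n arbitrary: n' p S)
  case 0
  then show ?case by (cases n') (auto simp: moves_def)
next
  case (Suc n)
  show ?case
  proof (cases n')
    case 0
    then show ?thesis using Suc.prems by (auto simp: moves_def)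
  next
    case (Suc n'')
    have "wins_fuel n (other p) (S - domino p x) = wins_fuel n'' (other p) (S - domino p x)"
      if "domino p x \<subseteq> S" for x
      using that Suc.prems \<open>n' = Suc n''\<close> card_Diff_subset[of "domino p x" S]
      by (intro Suc.IH) auto
    then show ?thesis unfolding \<open>n' = Suc n''\<close> wins_fuel_Suc_iff by blast
  qed
qed

lemma wins_first_iff:
  assumes "finite S"
  shows "wins_first p S \<longleftrightarrow> (\<exists>x. domino p x \<subseteq> S \<and> \<not> wins_first (other p) (S - domino p x))"
proof (cases "S = {}")
  case True
  then show ?thesis by (auto simp: wins_first_def)
next
  case False
  then obtain k where k: "card S = Suc k"
    using assms by (metis card_0_eq not0_implies_Suc)
  have "wins_fuel k (other p) (S - domino p x) = wins_first (other p) (S - domino p x)"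
    if "domino p x \<subseteq> S" for x
    using that assms k card_Diff_subset[of "domino p x" S] unfolding wins_first_def
    by (intro wins_fuel_sufficient) auto
  then show ?thesis unfolding wins_first_def k wins_fuel_Suc_iff by auto
qed

lemma wins_first_HorizontalI:
  "finite S \<Longrightarrow> domino Horizontal y \<subseteq> S \<Longrightarrow> \<not> wins_first Vertical (S - domino Horizontal y)
    \<Longrightarrow> wins_first Horizontal S"
  by (metis other.simps(2) wins_first_iff)

lemma Horizontal_reply:
  assumes "finite A" "\<not> wins_first Vertical A" "domino Vertical x \<subseteq> A"
  obtains y where "domino Horizontal y \<subseteq> A - domino Vertical x"
    and "\<not> wins_first Vertical (A - domino Vertical x - domino Horizontal y)"
proof -
  have "wins_first Horizontal (A - domino Vertical x)"
    using assms wins_first_iff[of A Vertical] by (metis other.simps(1))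
  then show ?thesis
    using that assms(1) wins_first_iff[of "A - domino Vertical x" Horizontal]
    by (metis finite_Diff other.simps(2))
qed

definition shift_cols :: "nat \<Rightarrow> cell \<Rightarrow> cell" where
  "shift_cols d = (\<lambda>(r, c). (r, c + d))"

lemma inj_shift_cols: "inj (shift_cols d)"
  unfolding shift_cols_def inj_def by auto

lemma image_shift_cols_domino: "shift_cols d ` domino p x = domino p (shift_cols d x)"
  by (cases p; cases x) (auto simp: shift_cols_def)

lemma domino_subset_shift_cols_image:
  "domino p z \<subseteq> shift_cols d ` S \<longleftrightarrow> (\<exists>x. z = shift_cols d x \<and> domino p x \<subseteq> S)"
proof
  assume sub: "domino p z \<subseteq> shift_cols d ` S"
  obtain r c where z: "z = (r, c)" by (cases z)
  have "z \<in> domino p z" by (cases p) (auto simp: z)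
  then have "d \<le> c" using sub z by (auto simp: shift_cols_def)
  then have "z = shift_cols d (r, c - d)" using z by (simp add: shift_cols_def)
  moreover from this have "domino p (r, c - d) \<subseteq> S"
    using sub image_shift_cols_domino inj_shift_cols by (metis inj_image_subset_iff)
  ultimately show "\<exists>x. z = shift_cols d x \<and> domino p x \<subseteq> S" by blast
next
  assume "\<exists>x. z = shift_cols d x \<and> domino p x \<subseteq> S"
  then show "domino p z \<subseteq> shift_cols d ` S" using image_shift_cols_domino by (metis image_mono)
qed

lemma wins_first_shift_cols: "finite S \<Longrightarrow> wins_first p (shift_cols d ` S) = wins_first p S"
proof (induction "card S" arbitrary: S p rule: less_induct)
  case less
  have diff: "shift_cols d ` S - domino p (shift_cols d x) = shift_cols d ` (S - domino p x)" for x
    using image_shift_cols_domino inj_shift_cols by (metis image_set_diff)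
  have IH: "wins_first q (shift_cols d ` (S - domino p x)) = wins_first q (S - domino p x)"
    if "domino p x \<subseteq> S" for x q
    using that less card_Diff_domino by blast
  have "wins_first p (shift_cols d ` S) \<longleftrightarrow>
      (\<exists>z. domino p z \<subseteq> shift_cols d ` S \<and> \<not> wins_first (other p) (shift_cols d ` S - domino p z))"
    using less.prems by (intro wins_first_iff) simp
  also have "\<dots> \<longleftrightarrow>
      (\<exists>x. domino p x \<subseteq> S \<and> \<not> wins_first (other p) (shift_cols d ` (S - domino p x)))"
    unfolding domino_subset_shift_cols_image by (metis diff)
  also have "\<dots> \<longleftrightarrow> (\<exists>x. domino p x \<subseteq> S \<and> \<not> wins_first (other p) (S - domino p x))"
    using IH by blast
  also have "\<dots> \<longleftrightarrow> wins_first p S"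
    using less.prems by (intro wins_first_iff[symmetric])
  finally show ?case .
qed

subsection \<open>Unions of positions without common columns\<close>

definition column_separated :: "cell set \<Rightarrow> cell set \<Rightarrow> bool" where
  "column_separated A B \<longleftrightarrow> (\<forall>a\<in>A. \<forall>b\<in>B. snd a \<noteq> snd b)"

lemma column_separated_disjoint: "column_separated A B \<Longrightarrow> A \<inter> B = {}"
  unfolding column_separated_def by auto

lemma column_separated_mono:
  "column_separated A B \<Longrightarrow> A' \<subseteq> A \<Longrightarrow> B' \<subseteq> B \<Longrightarrow> column_separated A' B'"
  unfolding column_separated_def by blast

lemma domino_Vertical_subset_Un:
  "column_separated A B \<Longrightarrow> domino Vertical x \<subseteq> A \<union> B
    \<Longrightarrow> domino Vertical x \<subseteq> A \<or> domino Vertical x \<subseteq> B"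
  unfolding column_separated_def by (cases x) fastforce

lemma not_wins_first_Vertical_Un:
  assumes "finite A" "finite B" "column_separated A B"
    and "\<not> wins_first Vertical A" "\<not> wins_first Vertical B"
  shows "\<not> wins_first Vertical (A \<union> B)"
  using assms
proof (induction "card A + card B" arbitrary: A B rule: less_induct)
  case less
  have "wins_first Horizontal (A \<union> B - domino Vertical x)"
    if D: "domino Vertical x \<subseteq> A \<union> B" for x
  proof -
    let ?D = "domino Vertical x"
    have disj: "A \<inter> B = {}" using less.prems(3) by (rule column_separated_disjoint)
    from domino_Vertical_subset_Un[OF less.prems(3) D] show ?thesis
    proof
      assume "?D \<subseteq> A"
      with less.prems obtain y where y: "domino Horizontal y \<subseteq> A - ?D"
        and lose: "\<not> wins_first Vertical (A - ?D - domino Horizontal y)"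
        by (metis Horizontal_reply)
      have "\<not> wins_first Vertical ((A - ?D - domino Horizontal y) \<union> B)"
        using less.prems lose card_Diff_domino[of A Vertical x] \<open>?D \<subseteq> A\<close>
          card_mono[of "A - ?D" "A - ?D - domino Horizontal y"]
        by (intro less.hyps) (auto elim: column_separated_mono)
      moreover have "(A - ?D - domino Horizontal y) \<union> B = A \<union> B - ?D - domino Horizontal y"
        using y disj \<open>?D \<subseteq> A\<close> by auto
      ultimately show ?thesis
        using y less.prems by (intro wins_first_HorizontalI) auto
    next
      assume "?D \<subseteq> B"
      with less.prems obtain y where y: "domino Horizontal y \<subseteq> B - ?D"
        and lose: "\<not> wins_first Vertical (B - ?D - domino Horizontal y)"
        by (metis Horizontal_reply)
      have "\<not> wins_first Vertical (A \<union> (B - ?D - domino Horizontal y))"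
        using less.prems lose card_Diff_domino[of B Vertical x] \<open>?D \<subseteq> B\<close>
          card_mono[of "B - ?D" "B - ?D - domino Horizontal y"]
        by (intro less.hyps) (auto elim: column_separated_mono)
      moreover have "A \<union> (B - ?D - domino Horizontal y) = A \<union> B - ?D - domino Horizontal y"
        using y disj \<open>?D \<subseteq> B\<close> by auto
      ultimately show ?thesis
        using y less.prems by (intro wins_first_HorizontalI) auto
    qed
  qed
  moreover have "finite (A \<union> B)" using less.prems(1,2) by blast
  ultimately show ?case using wins_first_iff[of "A \<union> B" Vertical] by (metis other.simps(1))
qed

lemma wins_first_Horizontal_Un:
  assumes "finite A" "finite B" "column_separated A B"
    and "wins_first Horizontal A" "\<not> wins_first Vertical B"
  shows "wins_first Horizontal (A \<union> B)"
proof -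
  obtain y where y: "domino Horizontal y \<subseteq> A"
    and lose: "\<not> wins_first Vertical (A - domino Horizontal y)"
    using assms(1,4) wins_first_iff[of A Horizontal] by (metis other.simps(2))
  have "\<not> wins_first Vertical ((A - domino Horizontal y) \<union> B)"
    using assms lose by (intro not_wins_first_Vertical_Un) (auto elim: column_separated_mono)
  moreover have "(A - domino Horizontal y) \<union> B = A \<union> B - domino Horizontal y"
    using y column_separated_disjoint[OF assms(3)] by auto
  ultimately show ?thesis using y assms by (intro wins_first_HorizontalI) auto
qed

subsection \<open>The quarter-turn symmetry of the m-by-2m board\<close>

text \<open>A rotation of the m-by-m square followed by a translation: it maps the square onto the
  right half of the m-by-2m board and turns vertical dominoes into horizontal ones.\<close>
definition quarter_turn :: "nat \<Rightarrow> cell \<Rightarrow> cell" where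
  "quarter_turn m = (\<lambda>(r, c). (c, 2 * m - 1 - r))"

lemma inj_on_quarter_turn: "inj_on (quarter_turn m) (grid m m)"
  unfolding inj_on_def quarter_turn_def grid_def by auto

lemma column_separated_quarter_turn:
  assumes "L \<subseteq> grid m m"
  shows "column_separated L (quarter_turn m ` L)"
  unfolding column_separated_def
proof (intro ballI)
  fix a b assume "a \<in> L" "b \<in> quarter_turn m ` L"
  then have "snd a < m" "m \<le> snd b"
    using assms by (auto simp: grid_def quarter_turn_def)
  then show "snd a \<noteq> snd b" by simp
qed

lemma quarter_turn_Un_Diff:
  assumes "L \<subseteq> grid m m" "P \<subseteq> grid m m"
  shows "(L \<union> quarter_turn m ` L) - (P \<union> quarter_turn m ` P)
    = (L - P) \<union> quarter_turn m ` (L - P)"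
proof -
  have sep: "column_separated (grid m m) (quarter_turn m ` grid m m)"
    by (rule column_separated_quarter_turn) simp
  have "quarter_turn m ` (L - P) = quarter_turn m ` L - quarter_turn m ` P"
    using assms by (intro inj_on_image_set_diff[OF inj_on_quarter_turn]) auto
  moreover have "L \<inter> quarter_turn m ` P = {}" "P \<inter> quarter_turn m ` L = {}"
    using column_separated_mono[OF sep assms(1) image_mono[OF assms(2)]]
      column_separated_mono[OF sep assms(2) image_mono[OF assms(1)]]
    by (simp_all add: column_separated_disjoint)
  ultimately show ?thesis by blast
qed

lemma quarter_turn_preimage:
  assumes "L \<subseteq> grid m m" "(r, c) \<in> quarter_turn m ` L"
  shows "(2 * m - 1 - c, r) \<in> L \<and> r < m \<and> m \<le> c \<and> c < 2 * m"
proof -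
  obtain a b where ab: "(a, b) \<in> L" "(r, c) = quarter_turn m (a, b)" using assms(2) by auto
  then have "a < m" "b < m" using assms(1) by (auto simp: grid_def)
  moreover have "r = b" "c = 2 * m - 1 - a" using ab(2) by (simp_all add: quarter_turn_def)
  ultimately show ?thesis using ab(1) by simp
qed

text \<open>Horizontal answers a vertical domino by its image or preimage under the quarter turn.\<close>
lemma Horizontal_copy:
  assumes L: "L \<subseteq> grid m m" and D: "domino Vertical x \<subseteq> L \<union> quarter_turn m ` L"
  obtains P y where "P \<subseteq> L" "P \<noteq> {}"
    "domino Horizontal y \<subseteq> L \<union> quarter_turn m ` L - domino Vertical x"
    "domino Vertical x \<union> domino Horizontal y = P \<union> quarter_turn m ` P"
proof -
  obtain r c where x: "x = (r, c)" by (cases x)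
  have sep: "column_separated L (quarter_turn m ` L)" using L by (rule column_separated_quarter_turn)
  from domino_Vertical_subset_Un[OF this D[unfolded x]] show thesis
  proof
    assume DL: "domino Vertical (r, c) \<subseteq> L"
    then have "Suc r < m" "c < m" using L by (auto simp: grid_def)
    then have turn: "quarter_turn m ` domino Vertical (r, c) = domino Horizontal (c, 2 * m - 2 - r)"
      by (auto simp: quarter_turn_def)
    have EL: "domino Horizontal (c, 2 * m - 2 - r) \<subseteq> quarter_turn m ` L"
      using DL unfolding turn[symmetric] by (rule image_mono)
    have "domino Vertical (r, c) \<inter> domino Horizontal (c, 2 * m - 2 - r) = {}"
      using column_separated_mono[OF sep DL EL] by (rule column_separated_disjoint)
    with EL have "domino Horizontal (c, 2 * m - 2 - r)
        \<subseteq> L \<union> quarter_turn m ` L - domino Vertical (r, c)"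
      by blast
    moreover have "domino Vertical (r, c) \<union> domino Horizontal (c, 2 * m - 2 - r)
        = domino Vertical (r, c) \<union> quarter_turn m ` domino Vertical (r, c)"
      by (simp only: turn)
    ultimately show thesis by (rule that[unfolded x, OF DL domino_nonempty])
  next
    assume DR: "domino Vertical (r, c) \<subseteq> quarter_turn m ` L"
    let ?y = "(2 * m - 1 - c, r)"
    have "(r, c) \<in> quarter_turn m ` L" "(Suc r, c) \<in> quarter_turn m ` L" using DR by auto
    then have pre: "?y \<in> L" "(2 * m - 1 - c, Suc r) \<in> L" "m \<le> c" "c < 2 * m"
      using quarter_turn_preimage[OF L] by blast+
    then have EL: "domino Horizontal ?y \<subseteq> L" by simp
    have turn: "quarter_turn m ` domino Horizontal ?y = domino Vertical (r, c)"
      using pre by (auto simp: quarter_turn_def)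
    have "domino Horizontal ?y \<inter> domino Vertical (r, c) = {}"
      using column_separated_mono[OF sep EL DR] by (rule column_separated_disjoint)
    with EL have "domino Horizontal ?y \<subseteq> L \<union> quarter_turn m ` L - domino Vertical (r, c)"
      by blast
    moreover have "domino Vertical (r, c) \<union> domino Horizontal ?y
        = domino Horizontal ?y \<union> quarter_turn m ` domino Horizontal ?y"
      by (simp only: turn Un_commute)
    ultimately show thesis by (rule that[unfolded x, OF EL domino_nonempty])
  qed
qed

lemma not_wins_first_Vertical_quarter_turn_Un:
  "L \<subseteq> grid m m \<Longrightarrow> \<not> wins_first Vertical (L \<union> quarter_turn m ` L)"
proof (induction "card L" arbitrary: L rule: less_induct)
  case less
  have finL: "finite L" using less.prems finite_grid finite_subset by blast
  let ?S = "L \<union> quarter_turn m ` L"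
  have "wins_first Horizontal (?S - domino Vertical x)" if D: "domino Vertical x \<subseteq> ?S" for x
  proof -
    obtain P y where P: "P \<subseteq> L" "P \<noteq> {}"
      and y: "domino Horizontal y \<subseteq> ?S - domino Vertical x"
      and removed: "domino Vertical x \<union> domino Horizontal y = P \<union> quarter_turn m ` P"
      using Horizontal_copy[OF less.prems D] by blast
    have "card (L - P) < card L"
      using P finL by (intro psubset_card_mono) auto
    then have "\<not> wins_first Vertical ((L - P) \<union> quarter_turn m ` (L - P))"
      using less.hyps less.prems by blast
    moreover have "?S - domino Vertical x - domino Horizontal y = ?S - (P \<union> quarter_turn m ` P)"
      using removed by blast
    moreover have "\<dots> = (L - P) \<union> quarter_turn m ` (L - P)"
      using P less.prems by (intro quarter_turn_Un_Diff) auto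
    ultimately show ?thesis using y finL by (intro wins_first_HorizontalI) auto
  qed
  moreover have "finite ?S" using finL by blast
  ultimately show ?case using wins_first_iff[of ?S Vertical] by (metis other.simps(1))
qed

lemma grid_add: "grid m (a + b) = grid m a \<union> shift_cols a ` grid m b"
proof (intro set_eqI iffI)
  fix z assume "z \<in> grid m (a + b)"
  then obtain r c where z: "z = (r, c)" "r < m" "c < a + b" by (auto simp: grid_def)
  show "z \<in> grid m a \<union> shift_cols a ` grid m b"
  proof (cases "c < a")
    case True
    then show ?thesis using z by (simp add: grid_def)
  next
    case False
    then have "z = shift_cols a (r, c - a)" "(r, c - a) \<in> grid m b"
      using z by (auto simp: shift_cols_def grid_def)
    then show ?thesis by blast
  qed
next
  fix z assume "z \<in> grid m a \<union> shift_cols a ` grid m b"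
  then show "z \<in> grid m (a + b)" by (auto simp: grid_def shift_cols_def)
qed

lemma column_separated_grid_shift_cols: "column_separated (grid m a) (shift_cols a ` grid m b)"
  by (auto simp: column_separated_def grid_def shift_cols_def)

lemma not_wins_first_Vertical_grid_add:
  "\<not> wins_first Vertical (grid m a) \<Longrightarrow> \<not> wins_first Vertical (grid m b)
    \<Longrightarrow> \<not> wins_first Vertical (grid m (a + b))"
  unfolding grid_add
  by (intro not_wins_first_Vertical_Un)
    (simp_all add: finite_grid column_separated_grid_shift_cols wins_first_shift_cols)

lemma wins_first_Horizontal_grid_add:
  "wins_first Horizontal (grid m a) \<Longrightarrow> \<not> wins_first Vertical (grid m b)
    \<Longrightarrow> wins_first Horizontal (grid m (a + b))"
  unfolding grid_add
  by (intro wins_first_Horizontal_Un)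
    (simp_all add: finite_grid column_separated_grid_shift_cols wins_first_shift_cols)

lemma not_wins_first_Vertical_grid_mult:
  assumes "\<not> wins_first Vertical (grid m a)"
  shows "\<not> wins_first Vertical (grid m (k * a))"
proof (induction k)
  case 0
  have "grid m 0 = {}" by (simp add: grid_def)
  then show ?case by (simp add: wins_first_def)
next
  case (Suc k)
  then show ?case using not_wins_first_Vertical_grid_add[OF assms] by simp
qed

lemma not_wins_first_Vertical_grid_lincomb:
  "\<not> wins_first Vertical (grid m a) \<Longrightarrow> \<not> wins_first Vertical (grid m b)
    \<Longrightarrow> \<not> wins_first Vertical (grid m (x * a + y * b))"
  by (intro not_wins_first_Vertical_grid_add not_wins_first_Vertical_grid_mult)

lemma grid_double: "grid m (2 * m) = grid m m \<union> quarter_turn m ` grid m m"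
proof (intro set_eqI iffI)
  fix z assume "z \<in> grid m (2 * m)"
  then obtain r c where z: "z = (r, c)" "r < m" "c < 2 * m" by (auto simp: grid_def)
  show "z \<in> grid m m \<union> quarter_turn m ` grid m m"
  proof (cases "c < m")
    case True
    then show ?thesis using z by (simp add: grid_def)
  next
    case False
    then have "z = quarter_turn m (2 * m - 1 - c, r)" "(2 * m - 1 - c, r) \<in> grid m m"
      using z by (auto simp: quarter_turn_def grid_def)
    then show ?thesis by blast
  qed
next
  fix z assume "z \<in> grid m m \<union> quarter_turn m ` grid m m"
  then show "z \<in> grid m (2 * m)" by (auto simp: grid_def quarter_turn_def)
qed

lemma not_wins_first_Vertical_grid_double: "\<not> wins_first Vertical (grid m (2 * m))"
  unfolding grid_double by (rule not_wins_first_Vertical_quarter_turn_Un) simp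

lemma wins_first_Horizontal_grid_double:
  assumes "0 < m"
  shows "wins_first Horizontal (grid m (2 * m))"
proof -
  let ?P = "{(m - 1, m - 1)}"
  have centre: "domino Horizontal (m - 1, m - 1) = ?P \<union> quarter_turn m ` ?P"
    using assms by (auto simp: quarter_turn_def)
  have P: "?P \<subseteq> grid m m" using assms by (simp add: grid_def)
  have sub: "domino Horizontal (m - 1, m - 1) \<subseteq> grid m (2 * m)"
    using assms by (auto simp: grid_def)
  have "grid m (2 * m) - domino Horizontal (m - 1, m - 1)
      = (grid m m - ?P) \<union> quarter_turn m ` (grid m m - ?P)"
    unfolding grid_double centre using P by (intro quarter_turn_Un_Diff) simp_all
  moreover have "\<not> wins_first Vertical ((grid m m - ?P) \<union> quarter_turn m ` (grid m m - ?P))"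
    by (rule not_wins_first_Vertical_quarter_turn_Un) blast
  ultimately show ?thesis
    using wins_first_HorizontalI[OF finite_grid sub] by simp
qed

lemma eventually_gcd_multiple_lincomb:
  fixes a b :: nat
  assumes "0 < a" "0 < b"
  shows "\<exists>N0. \<forall>N\<ge>N0. \<exists>x y. N * gcd a b = x * a + y * b"
proof -
  define g where "g = gcd a b"
  define K where "K = b div g"
  have Kg: "K * g = b" unfolding K_def g_def by simp
  then have "0 < K" using assms(2) by (cases K) auto
  obtain x0 y0 where bezout: "a * x0 = b * y0 + g"
    using bezout_nat[of a b] assms(1) unfolding g_def by auto
  have "N * g = (N mod K * x0) * a + (N div K - N mod K * y0) * b" if "K * K * y0 \<le> N" for N
  proof -
    let ?q = "N div K" and ?r = "N mod K"
    have "K * y0 \<le> ?q" using div_le_mono[OF that, of K] \<open>0 < K\<close> by simp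
    moreover have "?r * y0 \<le> K * y0" using mod_less_divisor[OF \<open>0 < K\<close>, of N] by simp
    ultimately have le: "?r * y0 \<le> ?q" by linarith
    have "N * g = ?q * b + ?r * g"
      by (metis Kg div_mult_mod_eq distrib_right mult.assoc)
    moreover have "?r * x0 * a = ?r * y0 * b + ?r * g"
      using arg_cong[OF bezout, of "\<lambda>t. ?r * t"] by (simp add: algebra_simps)
    moreover have "(?q - ?r * y0) * b + ?r * y0 * b = ?q * b"
      using le by (simp add: add_mult_distrib[symmetric])
    ultimately show ?thesis by linarith
  qed
  then show ?thesis unfolding g_def by blast
qed

theorem corollary3p3:
  fixes m j :: nat
  assumes "0 < m" and "0 < j"
    and "outcome (grid m j) \<in> {OutH, OutSecond}"
  shows "\<exists>N0::nat. \<forall>N\<ge>N0. outcome (grid m (N * gcd j (2 * m))) = OutH"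
proof -
  define g where "g = gcd j (2 * m)"
  have Vj: "\<not> wins_first Vertical (grid m j)"
    using assms(3) by (auto simp: outcome_def split: if_splits)
  obtain N0 where N0: "\<forall>N\<ge>N0. \<exists>x y. N * g = x * j + y * (2 * m)"
    using eventually_gcd_multiple_lincomb[of j "2 * m"] assms(1,2) unfolding g_def by auto
  define K where "K = 2 * m div g"
  have Kg: "K * g = 2 * m" by (simp add: K_def g_def)
  show ?thesis
  proof (intro exI allI impI)
    fix N assume N: "N0 + K \<le> N"
    then have "N0 \<le> N - K" by linarith
    then obtain x y where "(N - K) * g = x * j + y * (2 * m)" using N0 by blast
    moreover have "N * g = (N - K) * g + K * g" using N by (simp add: add_mult_distrib[symmetric])
    ultimately have width: "N * g = 2 * m + (x * j + y * (2 * m))" using Kg by simp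
    have "wins_first Horizontal (grid m (N * g))" unfolding width
      by (intro wins_first_Horizontal_grid_add wins_first_Horizontal_grid_double assms(1)
          not_wins_first_Vertical_grid_lincomb Vj not_wins_first_Vertical_grid_double)
    moreover have "\<not> wins_first Vertical (grid m (N * g))" unfolding width
      by (intro not_wins_first_Vertical_grid_add not_wins_first_Vertical_grid_lincomb Vj
          not_wins_first_Vertical_grid_double)
    ultimately show "outcome (grid m (N * gcd j (2 * m))) = OutH"
      by (simp add: outcome_def g_def)
  qed
qed

end
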